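(* Let $\mathcal F=(F,\rightarrowtail)$ be a finite argumentation framework, let $A\subseteq F$ be weakly admissible, and let $X\subseteq F$ be a set each of whose elements is defended by $A$ (every attacker of each $x\in X$ is attacked by some element of $A$). Then $A\cup X$ is weakly admissible.
   Context: An argumentation framework $\mathcal F=(F,\rightarrowtail)$ consists of a finite set $F$ of arguments and an attack relation $\rightarrowtail\subseteq F\times F$. An argument $y$ attacks a set $A$ if $y\rightarrowtail a$ for some $a\in A$; $A^+=\{x\in F:\exists a\in A,\ a\rightarrowtail x\}$. A set is conflict-free if none of its elements attacks one of its elements. For $A\subseteq F$, the $A$-reduct $\mathcal F^A$ is the restriction of $\mathcal F$ (arguments and attacks) to $F\setminus(A\cup A^+)$. Weak admissibility (defined recursively on the size of the framework): $A\subseteq F$ is weakly admissible in $\mathcal F$ if $A$ is conflict-free and for every $y\in F$ attacking $A$, $y$ belongs to no weakly admissible set of $\mathcal F^A$. *)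

theory Defs
  imports Main
begin

text \<open>An argumentation framework is given by a finite set F of arguments and an
attack relation R; only attacks between elements of F are relevant (the attack
relation of the framework is R restricted to F x F).\<close>

definition conflict_free :: "('a \<Rightarrow> 'a \<Rightarrow> bool) \<Rightarrow> 'a set \<Rightarrow> bool" where
  "conflict_free R A \<longleftrightarrow> (\<forall>a\<in>A. \<forall>b\<in>A. \<not> R a b)"

definition attacks_set :: "('a \<Rightarrow> 'a \<Rightarrow> bool) \<Rightarrow> 'a \<Rightarrow> 'a set \<Rightarrow> bool" where
  "attacks_set R y A \<longleftrightarrow> (\<exists>a\<in>A. R y a)"

definition plus :: "'a set \<Rightarrow> ('a \<Rightarrow> 'a \<Rightarrow> bool) \<Rightarrow> 'a set \<Rightarrow> 'a set" where
  "plus F R A = {x\<in>F. \<exists>a\<in>A. R a x}"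

text \<open>Argument set of the A-reduct (attacks are the restriction of R to it).\<close>
definition reduct :: "'a set \<Rightarrow> ('a \<Rightarrow> 'a \<Rightarrow> bool) \<Rightarrow> 'a set \<Rightarrow> 'a set" where
  "reduct F R A = F - (A \<union> plus F R A)"

lemma reduct_card_less:
  assumes "finite F" "A \<subseteq> F" "a \<in> A"
  shows "card (reduct F R A) < card F"
proof -
  have "reduct F R A \<subset> F" using assms unfolding reduct_def by blast
  thus ?thesis using assms(1) by (simp add: psubset_card_mono)
qed

function weakly_admissible :: "'a set \<Rightarrow> ('a \<Rightarrow> 'a \<Rightarrow> bool) \<Rightarrow> 'a set \<Rightarrow> bool" where
  "weakly_admissible F R A \<longleftrightarrow>
     (if finite F \<and> A \<subseteq> F then
        conflict_free R A \<and>
        (\<forall>y\<in>F. \<forall>a\<in>A. R y a \<longrightarrow>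
           (\<forall>B. \<not> (weakly_admissible (reduct F R A) R B \<and> y \<in> B)))
      else False)"
  by pat_completeness auto
termination
  by (relation "measure (\<lambda>(F, R, A). card F)") (auto intro: reduct_card_less)

definition defends :: "'a set \<Rightarrow> ('a \<Rightarrow> 'a \<Rightarrow> bool) \<Rightarrow> 'a set \<Rightarrow> 'a \<Rightarrow> bool" where
  "defends F R A x \<longleftrightarrow> (\<forall>y\<in>F. R y x \<longrightarrow> (\<exists>a\<in>A. R a y))"

end

theory Submission
  imports Defs
begin

text \<open>Call S unattacked in G if no argument of G attacks S. If S is unattacked in G, then
B \<union> S is weakly admissible in G whenever B is weakly admissible in the reduct of G by S:
attackers of S do not exist, and reducing G by S and then by B is reducing it by B \<union> S,
so the attackers of B are handled by the weak admissibility of B.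

The arguments X - A defended by A lie in the reduct F' of F by A and are unattacked there,
since each of their attackers is attacked by A. Taking B = {} above shows that X - A is
weakly admissible in F', so it cannot attack A. And whenever C is weakly admissible in the
reduct of F by A \<union> X, which is the reduct of F' by X - A, the set C \<union> (X - A) is weakly
admissible in F', so C contains no attacker of A.\<close>

declare weakly_admissible.simps [simp del]

lemma weakly_admissible_iff:
  "weakly_admissible G R B \<longleftrightarrow>
     finite G \<and> B \<subseteq> G \<and> conflict_free R B \<and>
     (\<forall>y\<in>G. \<forall>b\<in>B. R y b \<longrightarrow> (\<forall>C. \<not> (weakly_admissible (reduct G R B) R C \<and> y \<in> C)))"
  by (subst weakly_admissible.simps) auto

lemma weakly_admissible_imp_finite: "weakly_admissible G R B \<Longrightarrow> finite G"
  unfolding weakly_admissible_iff[of G R B] by blast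

lemma weakly_admissible_imp_subset: "weakly_admissible G R B \<Longrightarrow> B \<subseteq> G"
  unfolding weakly_admissible_iff[of G R B] by blast

lemma weakly_admissible_imp_conflict_free: "weakly_admissible G R B \<Longrightarrow> conflict_free R B"
  unfolding weakly_admissible_iff[of G R B] by blast

lemma reduct_subset: "reduct G R A \<subseteq> G"
  unfolding reduct_def by blast

lemma reduct_reduct: "reduct (reduct G R A) R B = reduct G R (A \<union> B)"
  unfolding reduct_def plus_def by blast

lemma weakly_admissible_reduct_not_attacks:
  assumes "weakly_admissible G R A" "weakly_admissible (reduct G R A) R C" "y \<in> C"
  shows "\<not> attacks_set R y A"
proof -
  have "C \<subseteq> reduct G R A"
    using assms(2) by (rule weakly_admissible_imp_subset)
  then have "y \<in> G"
    using reduct_subset[of G R A] assms(3) by blast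
  moreover have "\<forall>y\<in>G. \<forall>a\<in>A. R y a \<longrightarrow> (\<forall>C. \<not> (weakly_admissible (reduct G R A) R C \<and> y \<in> C))"
    using assms(1) unfolding weakly_admissible_iff[of G R A] by blast
  ultimately show ?thesis
    using assms(2,3) unfolding attacks_set_def by blast
qed

definition unattacked :: "'a set \<Rightarrow> ('a \<Rightarrow> 'a \<Rightarrow> bool) \<Rightarrow> 'a set \<Rightarrow> bool" where
  "unattacked G R S \<longleftrightarrow> (\<forall>s\<in>S. \<forall>z\<in>G. \<not> R z s)"

lemma unattacked_imp_conflict_free: "S \<subseteq> G \<Longrightarrow> unattacked G R S \<Longrightarrow> conflict_free R S"
  unfolding unattacked_def conflict_free_def by blast

lemma weakly_admissible_empty: "finite G \<Longrightarrow> weakly_admissible G R {}"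
  unfolding weakly_admissible_iff[of G R "{}"] conflict_free_def by blast

lemma weakly_admissible_Un_unattacked:
  assumes "finite G" "S \<subseteq> G" "unattacked G R S" "weakly_admissible (reduct G R S) R B"
  shows "weakly_admissible G R (B \<union> S)"
proof -
  have B: "B \<subseteq> reduct G R S" "conflict_free R B"
    "\<forall>y\<in>reduct G R S. \<forall>b\<in>B. R y b \<longrightarrow>
       (\<forall>C. \<not> (weakly_admissible (reduct (reduct G R S) R B) R C \<and> y \<in> C))"
    using assms(4) unfolding weakly_admissible_iff[of "reduct G R S"] by blast+
  have "B \<subseteq> G"
    using B(1) reduct_subset[of G R S] by blast
  moreover have "conflict_free R (B \<union> S)"
    using B(1,2) assms(2,3) \<open>B \<subseteq> G\<close>
    unfolding conflict_free_def unattacked_def reduct_def plus_def by blast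
  moreover have "\<not> (weakly_admissible (reduct G R (B \<union> S)) R C \<and> y \<in> C)"
    if "y \<in> G" "b \<in> B \<union> S" "R y b" for y b C
  proof
    assume C: "weakly_admissible (reduct G R (B \<union> S)) R C \<and> y \<in> C"
    then have C': "weakly_admissible (reduct (reduct G R S) R B) R C"
      by (simp add: reduct_reduct Un_commute)
    then have "y \<in> reduct G R S"
      using weakly_admissible_imp_subset[OF C'] reduct_subset[of "reduct G R S" R B] C by blast
    moreover have "b \<in> B"
      using that assms(3) unfolding unattacked_def by blast
    ultimately show False
      using B(3) C C' \<open>R y b\<close> by blast
  qed
  ultimately show ?thesis
    using assms(1,2) unfolding weakly_admissible_iff[of G R "B \<union> S"] by blast
qed

lemma weakly_admissible_unattacked:
  assumes "finite G" "S \<subseteq> G" "unattacked G R S"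
  shows "weakly_admissible G R S"
proof -
  have "finite (reduct G R S)"
    using assms(1) reduct_subset[of G R S] by (rule finite_subset[rotated])
  then show ?thesis
    using weakly_admissible_Un_unattacked[OF assms weakly_admissible_empty] by simp
qed

lemma weakly_admissible_Un_unattacked_in_reduct:
  assumes A: "weakly_admissible F R A"
    and S: "S \<subseteq> reduct F R A" "unattacked (reduct F R A) R S"
  shows "weakly_admissible F R (A \<union> S)"
proof -
  have fin: "finite F" "finite (reduct F R A)"
    using weakly_admissible_imp_finite[OF A] reduct_subset[of F R A] finite_subset by blast+
  have A_sub: "A \<subseteq> F"
    using A by (rule weakly_admissible_imp_subset)
  have "A \<union> S \<subseteq> F"
    using A_sub S(1) reduct_subset[of F R A] by blast
  moreover have "conflict_free R (A \<union> S)"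
  proof -
    have "\<not> R a s" if "a \<in> A" "s \<in> S" for a s
      using that S(1) A_sub unfolding reduct_def plus_def by blast
    moreover have "\<not> attacks_set R s A" if "s \<in> S" for s
      using weakly_admissible_reduct_not_attacks[OF A weakly_admissible_unattacked[OF fin(2) S]] that .
    ultimately show ?thesis
      using weakly_admissible_imp_conflict_free[OF A] unattacked_imp_conflict_free[OF S]
      unfolding conflict_free_def attacks_set_def by blast
  qed
  moreover have "\<not> (weakly_admissible (reduct F R (A \<union> S)) R C \<and> y \<in> C)"
    if "R y c" "c \<in> A \<union> S" for y c C
  proof
    assume C: "weakly_admissible (reduct F R (A \<union> S)) R C \<and> y \<in> C"
    then have C': "weakly_admissible (reduct (reduct F R A) R S) R C"
      by (simp add: reduct_reduct)
    have "weakly_admissible (reduct F R A) R (C \<union> S)"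
      using fin(2) S C' by (rule weakly_admissible_Un_unattacked)
    then have "\<not> attacks_set R y A"
      using C by (intro weakly_admissible_reduct_not_attacks[OF A]) auto
    moreover have "y \<in> reduct F R A"
      using C weakly_admissible_imp_subset[OF C'] reduct_subset[of "reduct F R A" R S] by blast
    then have "c \<in> A"
      using that S(2) unfolding unattacked_def by blast
    ultimately show False
      using \<open>R y c\<close> unfolding attacks_set_def by blast
  qed
  ultimately show ?thesis
    using fin(1) unfolding weakly_admissible_iff[of F R "A \<union> S"] by blast
qed

lemma defended_in_reduct:
  assumes "conflict_free R A" "A \<subseteq> F" "x \<in> F" "x \<notin> A" "defends F R A x"
  shows "x \<in> reduct F R A"
  using assms unfolding conflict_free_def defends_def reduct_def plus_def by blast

lemma defended_unattacked_in_reduct: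
  "\<forall>x\<in>X. defends F R A x \<Longrightarrow> unattacked (reduct F R A) R X"
  unfolding defends_def unattacked_def reduct_def plus_def by blast

theorem mainTheorem15:
  fixes F :: "'a set" and R :: "'a \<Rightarrow> 'a \<Rightarrow> bool" and A X :: "'a set"
  assumes "finite F"
    and "weakly_admissible F R A"
    and "X \<subseteq> F"
    and "\<forall>x\<in>X. defends F R A x"
  shows "weakly_admissible F R (A \<union> X)"
proof -
  have "X - A \<subseteq> reduct F R A"
    using defended_in_reduct[OF weakly_admissible_imp_conflict_free[OF assms(2)]
        weakly_admissible_imp_subset[OF assms(2)]] assms(3,4) by blast
  moreover have "unattacked (reduct F R A) R (X - A)"
    using defended_unattacked_in_reduct[of "X - A"] assms(4) by blast
  ultimately have "weakly_admissible F R (A \<union> (X - A))"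
    using weakly_admissible_Un_unattacked_in_reduct[OF assms(2)] by blast
  then show ?thesis
    by (simp add: Un_Diff_cancel)
qed

end
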